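(* Let $\pi_3=2\int_0^1\frac{\mathrm{d}t}{\sqrt{1-t^6}}$ and let $\mathrm{sleaf}_3:\mathbb{R}\to\mathbb{R}$ be the leaf function of basis $3$. For every integer $m$: (i) if $\frac{\pi_3}{2}(4m-1)\le l\le\frac{\pi_3}{2}(4m+1)$, then $\mathrm{sleaf}_3(2l)=\dfrac{2\,\mathrm{sleaf}_3(l)\sqrt{1-(\mathrm{sleaf}_3(l))^6}}{\sqrt{1+8(\mathrm{sleaf}_3(l))^6}}$; (ii) if $\frac{\pi_3}{2}(4m+1)\le l\le\frac{\pi_3}{2}(4m+3)$, then $\mathrm{sleaf}_3(2l)=-\dfrac{2\,\mathrm{sleaf}_3(l)\sqrt{1-(\mathrm{sleaf}_3(l))^6}}{\sqrt{1+8(\mathrm{sleaf}_3(l))^6}}$.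
   Context: For a natural number $n$, the leaf function $\mathrm{sleaf}_n:\mathbb{R}\to\mathbb{R}$ is the solution of $\frac{\mathrm{d}^2r}{\mathrm{d}l^2}=-n\,r^{2n-1}$ with $r(0)=0$, $r'(0)=1$; it is periodic with period $2\pi_n$, where $\pi_n=2\int_0^1\frac{\mathrm{d}t}{\sqrt{1-t^{2n}}}$, and on $[-\pi_n/2,\pi_n/2]$ it is the inverse of $r\mapsto\int_0^r\frac{\mathrm{d}t}{\sqrt{1-t^{2n}}}$. *)

theory Defs
  imports "HOL-Analysis.Analysis"
begin

text \<open>pi_n = 2 * int_0^1 dt / sqrt(1 - t^(2n)) (Henstock-Kurzweil integral; the
  integrand is absolutely integrable, so this is the improper integral).\<close>
definition leaf_pi :: "nat \<Rightarrow> real" where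
  "leaf_pi n = 2 * integral {0..1} (\<lambda>t. 1 / sqrt (1 - t ^ (2 * n)))"

definition sleaf :: "nat \<Rightarrow> real \<Rightarrow> real" where
  "sleaf n = (THE r. \<exists>r'. r 0 = 0 \<and> r' 0 = 1 \<and>
     (\<forall>x. (r has_real_derivative r' x) (at x)) \<and>
     (\<forall>x. (r' has_real_derivative (- real n * r x ^ (2 * n - 1))) (at x)))"

end

(* The initial value problem r'' = -3 r^5, r(0) = 0, r'(0) = 1 has at most one solution:
   the first integral r'^2 + r^6 = 1 gives |r| <= 1, so the nonlinearity is Lipschitz and a
   Gronwall argument applies.

   Duplication: if (r, r') solves the problem, so does x |-> D(x/2) with
   D = 2 r r' / sqrt (1 + 8 r^6); hence sleaf_3 (2 l) = 2 s s' / sqrt (1 + 8 s^6) with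
   s = sleaf_3 l and s' its derivative.

   Sign of s': an explicit solution is sin (theta l), where theta inverts
   theta |-> int_0^theta d phi / sqrt (1 + sin^2 phi + sin^4 phi).  Since
   1 - s^6 = (1 - s^2) (1 + s^2 + s^4), its derivative is
   cos theta * sqrt (1 + sin^2 theta + sin^4 theta) = +- sqrt (1 - s^6), with the sign of
   cos theta.  The substitution t = sin phi turns pi_3 / 2 into the integral up to pi/2, so
   cos theta changes sign exactly at the odd multiples of pi_3 / 2. *)

theory Submission
  imports Defs
begin

lemma abs_power_diff_le:
  fixes x y :: real
  assumes "\<bar>x\<bar> \<le> 1" "\<bar>y\<bar> \<le> 1"
  shows "\<bar>x ^ k - y ^ k\<bar> \<le> k * \<bar>x - y\<bar>"
proof -
  have "\<bar>\<Sum>i<k. y ^ (k - Suc i) * x ^ i\<bar> \<le> (\<Sum>i<k. 1)"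
    by (rule order_trans[OF sum_abs sum_mono])
       (use assms in \<open>simp add: abs_mult power_abs power_le_one mult_le_one\<close>)
  then have "\<bar>x - y\<bar> * \<bar>\<Sum>i<k. y ^ (k - Suc i) * x ^ i\<bar> \<le> \<bar>x - y\<bar> * k"
    by (simp add: mult_left_mono)
  then show ?thesis
    by (simp add: power_diff_sumr2 abs_mult mult.commute)
qed

lemma nonneg_eq_0_if_deriv_bounded:
  fixes E E' :: "real \<Rightarrow> real"
  assumes "\<And>x. (E has_real_derivative E' x) (at x)"
    and "\<And>x. \<bar>E' x\<bar> \<le> c * E x" "\<And>x. 0 \<le> E x" "E 0 = 0"
  shows "E x = 0"
proof -
  have right: "F y = 0"
    if F: "\<And>x. (F has_real_derivative F' x) (at x)" "\<And>x. \<bar>F' x\<bar> \<le> c * F x" "\<And>x. 0 \<le> F x" "F 0 = 0"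
      and "0 \<le> y" for F F' :: "real \<Rightarrow> real" and y
  proof -
    have "F y * exp (- c * y) \<le> F 0 * exp (- c * 0)"
    proof (rule DERIV_nonpos_imp_nonincreasing[OF \<open>0 \<le> y\<close>])
      fix x
      have "((\<lambda>x. F x * exp (- c * x)) has_real_derivative (F' x - c * F x) * exp (- c * x)) (at x)"
        using F(1) by (auto intro!: derivative_eq_intros simp: algebra_simps)
      moreover have "(F' x - c * F x) * exp (- c * x) \<le> 0"
        using F(2)[of x] by (simp add: mult_nonpos_nonneg)
      ultimately show "\<exists>d. ((\<lambda>x. F x * exp (- c * x)) has_real_derivative d) (at x) \<and> d \<le> 0"
        by blast
    qed
    then show ?thesis using F(3)[of y] F(4) by (simp add: mult_le_0_iff)
  qed
  show ?thesis
  proof (cases "0 \<le> x")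
    case True
    then show ?thesis using right[OF assms] by blast
  next
    case False
    have "((\<lambda>x. E (- x)) has_real_derivative - E' (- x)) (at x)" for x
      using DERIV_chain2[OF assms(1) DERIV_minus[OF DERIV_ident]] by simp
    from right[of "\<lambda>x. E (- x)", OF this _ assms(3) _, of "- x"] False assms(2,4) show ?thesis
      by simp
  qed
qed

lemma signed_integral_has_real_derivative:
  fixes g :: "real \<Rightarrow> real"
  assumes "continuous_on UNIV g"
  shows "((\<lambda>x. integral {0..x} g - integral {x..0} g) has_real_derivative g x) (at x)"
proof -
  define a where "a = min 0 x - 1"
  have integrable: "g integrable_on {u..v}" for u v
    using assms by (intro integrable_continuous_real) (auto intro: continuous_on_subset)
  have eq: "integral {0..y} g - integral {y..0} g = integral {a..y} g - integral {a..0} g"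
    if "y \<in> {a<..}" for y
  proof (cases "0 \<le> y")
    case True
    then have "integral {y..0} g = 0"
      by (cases "y = 0") auto
    moreover have "integral {a..0} g + integral {0..y} g = integral {a..y} g"
      using True by (intro Henstock_Kurzweil_Integration.integral_combine integrable) (auto simp: a_def)
    ultimately show ?thesis by simp
  next
    case False
    then have "integral {a..y} g + integral {y..0} g = integral {a..0} g"
      using that by (intro Henstock_Kurzweil_Integration.integral_combine integrable) (auto simp: a_def)
    with False show ?thesis by simp
  qed
  have "((\<lambda>y. integral {a..y} g) has_real_derivative g x) (at x within {a..x + 1})"
    using assms by (intro integral_has_real_derivative) (auto simp: a_def intro: continuous_on_subset)
  then have "((\<lambda>y. integral {a..y} g - integral {a..0} g) has_real_derivative g x) (at x)"
    by (simp add: at_within_Icc_at a_def DERIV_diff[where E=0, simplified])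
  then show ?thesis
    by (rule has_field_derivative_transform_within_open[where S="{a<..}"]) (auto simp: a_def eq)
qed

lemma strict_mono_if_deriv_pos:
  fixes f :: "real \<Rightarrow> real"
  assumes deriv: "\<And>x. (f has_real_derivative f' x) (at x)" and pos: "\<And>x. f' x > 0"
  shows "strict_mono f"
proof (rule strict_monoI)
  fix x y :: real
  assume "x < y"
  then show "f x < f y"
  proof (rule DERIV_pos_imp_increasing)
    fix z
    show "\<exists>d. (f has_real_derivative d) (at z) \<and> d > 0"
      using deriv[of z] pos[of z] by blast
  qed
qed

lemma bij_if_deriv_ge:
  fixes f :: "real \<Rightarrow> real"
  assumes deriv: "\<And>x. (f has_real_derivative f' x) (at x)" and ge: "\<And>x. f' x \<ge> c" and "c > 0"
  shows "bij f"
proof (rule bijI)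
  have "strict_mono f"
    by (rule strict_mono_if_deriv_pos[OF deriv]) (metis ge \<open>c > 0\<close> less_le_trans)
  then show "inj f"
    by (rule strict_mono_imp_inj_on)
  have grows: "f y - c * y \<le> f z - c * z" if "y \<le> z" for y z
  proof (rule DERIV_nonneg_imp_nondecreasing[OF that])
    fix x
    show "\<exists>d. ((\<lambda>x. f x - c * x) has_real_derivative d) (at x) \<and> d \<ge> 0"
      using ge[of x] by (intro exI[of _ "f' x - c"] conjI) (auto intro!: derivative_eq_intros deriv)
  qed
  show "surj f"
  proof (rule surjI[of f "\<lambda>t. SOME x. f x = t"], rule someI_ex)
    fix t
    define b where "b = (\<bar>t\<bar> + \<bar>f 0\<bar>) / c"
    have "f (- b) \<le> f 0 - c * b" "f 0 + c * b \<le> f b"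
      using grows[of "- b" 0] grows[of 0 b] \<open>c > 0\<close> by (auto simp: b_def)
    moreover have "c * b = \<bar>t\<bar> + \<bar>f 0\<bar>"
      using \<open>c > 0\<close> by (simp add: b_def)
    ultimately have "f (- b) \<le> t" "t \<le> f b"
      by linarith+
    moreover have "- b \<le> b"
      using \<open>c > 0\<close> by (simp add: b_def)
    ultimately show "\<exists>x. f x = t"
      using IVT[of f "- b" t b] deriv DERIV_isCont by blast
  qed
qed

lemma inv_has_real_derivative:
  fixes f :: "real \<Rightarrow> real"
  assumes deriv: "\<And>x. (f has_real_derivative f' x) (at x)" and ge: "\<And>x. f' x \<ge> c" and "c > 0"
  shows "(inv f has_real_derivative inverse (f' (inv f y))) (at y)"
proof -
  have bij: "bij f"
    using bij_if_deriv_ge[OF assms] .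
  have "isCont (inv f) (f (inv f y))"
    by (rule isCont_inverse_function2[where a="inv f y - 1" and b="inv f y + 1"])
       (auto simp: bij bij_is_inj intro: DERIV_isCont deriv)
  then have cont: "isCont (inv f) y"
    by (simp add: bij bij_is_surj surj_f_inv_f)
  show ?thesis
  proof (rule DERIV_inverse_function)
    show "(f has_real_derivative f' (inv f y)) (at (inv f y))"
      by (rule deriv)
    show "f' (inv f y) \<noteq> 0"
      using ge[of "inv f y"] \<open>c > 0\<close> by simp
    show "y - 1 < y" "y < y + 1"
      by simp_all
    show "f (inv f z) = z" for z
      using bij by (simp add: bij_is_surj surj_f_inv_f)
  qed (rule cont)
qed

definition leaf_ivp :: "nat \<Rightarrow> (real \<Rightarrow> real) \<Rightarrow> (real \<Rightarrow> real) \<Rightarrow> bool" where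
  "leaf_ivp n r r' \<longleftrightarrow> r 0 = 0 \<and> r' 0 = 1 \<and>
     (\<forall>x. (r has_real_derivative r' x) (at x)) \<and>
     (\<forall>x. (r' has_real_derivative - real n * r x ^ (2 * n - 1)) (at x))"

lemma leaf_ivp_energy:
  assumes "leaf_ivp n r r'" "n \<ge> 1"
  shows "r' x ^ 2 + r x ^ (2 * n) = 1"
proof -
  have "((\<lambda>x. r' x ^ 2 + r x ^ (2 * n)) has_real_derivative 0) (at x)" for x
  proof (rule DERIV_cong)
    show "((\<lambda>x. r' x ^ 2 + r x ^ (2 * n)) has_real_derivative
        of_nat 2 * r' x ^ 1 * (- real n * r x ^ (2 * n - 1)) + of_nat (2 * n) * r x ^ (2 * n - 1) * r' x) (at x)"
      using assms(1) unfolding leaf_ivp_def by (auto intro!: derivative_eq_intros)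
  qed (use assms(2) in simp)
  from DERIV_isconst_all[OF allI[OF this], of x 0] show ?thesis
    using assms unfolding leaf_ivp_def by simp
qed

lemma leaf_ivp_abs_le_one:
  assumes "leaf_ivp n r r'" "n \<ge> 1"
  shows "\<bar>r x\<bar> \<le> 1"
proof -
  have "r x ^ (2 * n) \<le> 1"
    using leaf_ivp_energy[OF assms, of x] zero_le_power2[of "r' x"] by linarith
  then have "\<bar>r x\<bar> ^ (2 * n) \<le> 1"
    by (simp add: power_even_abs)
  then show ?thesis
    using assms(2) by (simp add: power_le_one_iff)
qed

lemma leaf_ivp_unique:
  assumes "leaf_ivp n r r'" "leaf_ivp n s s'" "n \<ge> 1"
  shows "r x = s x"
proof -
  define E where "E x = (r x - s x) ^ 2 + (r' x - s' x) ^ 2" for x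
  define E' where "E' x = 2 * (r x - s x) * (r' x - s' x)
    - 2 * real n * (r' x - s' x) * (r x ^ (2 * n - 1) - s x ^ (2 * n - 1))" for x
  have dE: "(E has_real_derivative E' x) (at x)" for x
    unfolding E_def E'_def using assms(1,2) unfolding leaf_ivp_def
    by (auto intro!: derivative_eq_intros simp: algebra_simps)
  have bound: "\<bar>E' x\<bar> \<le> (1 + 2 * real n * real n) * E x" for x
  proof -
    define a b where "a = r x - s x" and "b = r' x - s' x"
    have "\<bar>r x ^ (2 * n - 1) - s x ^ (2 * n - 1)\<bar> \<le> real (2 * n - 1) * \<bar>a\<bar>"
      unfolding a_def using assms
      by (intro abs_power_diff_le leaf_ivp_abs_le_one)
    also have "\<dots> \<le> 2 * real n * \<bar>a\<bar>"
      using assms(3) by (intro mult_right_mono) auto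
    finally have \<Delta>: "\<bar>r x ^ (2 * n - 1) - s x ^ (2 * n - 1)\<bar> \<le> 2 * real n * \<bar>a\<bar>" .
    have "\<bar>E' x\<bar> \<le> 2 * \<bar>a\<bar> * \<bar>b\<bar> + 2 * real n * \<bar>b\<bar> * \<bar>r x ^ (2 * n - 1) - s x ^ (2 * n - 1)\<bar>"
      unfolding E'_def a_def[symmetric] b_def[symmetric]
      by (rule order_trans[OF abs_triangle_ineq4]) (simp add: abs_mult)
    also have "\<dots> \<le> 2 * \<bar>a\<bar> * \<bar>b\<bar> + 2 * real n * \<bar>b\<bar> * (2 * real n * \<bar>a\<bar>)"
      by (intro add_left_mono mult_left_mono \<Delta>) auto
    also have "\<dots> = (1 + 2 * real n * real n) * (2 * \<bar>a\<bar> * \<bar>b\<bar>)"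
      by (simp add: algebra_simps)
    also have "\<dots> \<le> (1 + 2 * real n * real n) * E x"
      unfolding E_def a_def[symmetric] b_def[symmetric]
      by (intro mult_left_mono) (auto simp: sum_squares_bound[of "\<bar>a\<bar>" "\<bar>b\<bar>", simplified])
    finally show ?thesis .
  qed
  have "E 0 = 0"
    using assms unfolding E_def leaf_ivp_def by simp
  then have "E x = 0"
    using nonneg_eq_0_if_deriv_bounded[OF dE bound] by (simp add: E_def)
  then show ?thesis by (simp add: E_def add_nonneg_eq_0_iff)
qed

lemma sleaf_eqI:
  assumes "leaf_ivp n r r'" "n \<ge> 1"
  shows "sleaf n = r"
  unfolding sleaf_def
proof (rule the_equality)
  show "\<exists>r'. r 0 = 0 \<and> r' 0 = 1 \<and> (\<forall>x. (r has_real_derivative r' x) (at x)) \<and>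
      (\<forall>x. (r' has_real_derivative - real n * r x ^ (2 * n - 1)) (at x))"
    using assms(1) unfolding leaf_ivp_def by blast
next
  fix s assume "\<exists>s'. s 0 = 0 \<and> s' 0 = 1 \<and> (\<forall>x. (s has_real_derivative s' x) (at x)) \<and>
      (\<forall>x. (s' has_real_derivative - real n * s x ^ (2 * n - 1)) (at x))"
  then obtain s' where "leaf_ivp n s s'" unfolding leaf_ivp_def by blast
  then show "s = r" using leaf_ivp_unique[OF _ assms(1,2)] by blast
qed

locale leaf3_solution =
  fixes r r' :: "real \<Rightarrow> real"
  assumes ivp: "leaf_ivp 3 r r'"
begin

definition radical :: "real \<Rightarrow> real" where
  "radical t = sqrt (1 + 8 * r t ^ 6)"

definition doubled :: "real \<Rightarrow> real" where
  "doubled t = 2 * r t * r' t / radical t"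

definition doubled' :: "real \<Rightarrow> real" where
  "doubled' t = (1 - 20 * r t ^ 6 - 8 * r t ^ 12) / radical t ^ 3"

lemma r_has_real_derivative: "(r has_real_derivative r' t) (at t within S)"
  and r'_has_real_derivative: "(r' has_real_derivative - 3 * r t ^ 5) (at t within S)"
  and r'_squared: "r' t ^ 2 = 1 - r t ^ 6"
  using ivp leaf_ivp_energy[OF ivp, of t]
  by (auto simp: leaf_ivp_def intro: has_field_derivative_at_within)

lemma radicand_pos: "0 < 1 + 8 * r t ^ 6"
  by (simp add: add_pos_nonneg zero_le_even_power)

lemma radical_squared: "radical t ^ 2 = 1 + 8 * r t ^ 6"
  and radical_pos: "radical t > 0"
  unfolding radical_def using radicand_pos[of t] by simp_all

lemma radical_has_real_derivative:
  "(radical has_real_derivative 24 * r t ^ 5 * r' t / radical t) (at t within S)"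
  unfolding radical_def using radicand_pos[of t]
  by (auto intro!: derivative_eq_intros r_has_real_derivative simp: field_simps)

lemma doubled_has_real_derivative: "(doubled has_real_derivative 2 * doubled' t) (at t)"
proof (rule DERIV_cong)
  show "(doubled has_real_derivative
      ((2 * r' t ^ 2 - 6 * r t ^ 6) * radical t - 48 * r t ^ 6 * r' t ^ 2 / radical t)
        / (radical t * radical t)) (at t)"
    unfolding doubled_def using radical_pos[of t]
    by (auto intro!: derivative_eq_intros r_has_real_derivative r'_has_real_derivative
          radical_has_real_derivative simp: field_simps power2_eq_square) algebra
  have "(2 * r' t ^ 2 - 6 * r t ^ 6) * radical t ^ 2 - 48 * r t ^ 6 * r' t ^ 2
      = 2 * (1 - 20 * r t ^ 6 - 8 * r t ^ 12)"
    unfolding radical_squared r'_squared by algebra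
  then show "((2 * r' t ^ 2 - 6 * r t ^ 6) * radical t - 48 * r t ^ 6 * r' t ^ 2 / radical t)
      / (radical t * radical t) = 2 * doubled' t"
    using radical_pos[of t] unfolding doubled'_def
    by (simp add: field_simps power2_eq_square power3_eq_cube)
qed

lemma doubled'_has_real_derivative: "(doubled' has_real_derivative - 6 * doubled t ^ 5) (at t)"
proof (rule DERIV_cong)
  show "(doubled' has_real_derivative
      ((- 120 * r t ^ 5 - 96 * r t ^ 11) * r' t * radical t ^ 2
        - 72 * (1 - 20 * r t ^ 6 - 8 * r t ^ 12) * r t ^ 5 * r' t) / radical t ^ 5) (at t)"
    unfolding doubled'_def using radical_pos[of t]
    by (auto intro!: derivative_eq_intros r_has_real_derivative r'_has_real_derivative
          radical_has_real_derivative simp: field_simps power2_eq_square) algebra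
  have "(- 120 * r t ^ 5 - 96 * r t ^ 11) * r' t * radical t ^ 2
        - 72 * (1 - 20 * r t ^ 6 - 8 * r t ^ 12) * r t ^ 5 * r' t
      = - 192 * r t ^ 5 * r' t * (r' t ^ 2) ^ 2"
    unfolding radical_squared r'_squared by algebra
  also have "\<dots> = - 192 * r t ^ 5 * r' t ^ 5"
    by algebra
  finally show "((- 120 * r t ^ 5 - 96 * r t ^ 11) * r' t * radical t ^ 2
        - 72 * (1 - 20 * r t ^ 6 - 8 * r t ^ 12) * r t ^ 5 * r' t) / radical t ^ 5
      = - 6 * doubled t ^ 5"
    unfolding doubled_def by (simp add: power_divide power_mult_distrib)
qed

lemma leaf_ivp_doubled_half: "leaf_ivp 3 (\<lambda>x. doubled (x / 2)) (\<lambda>x. doubled' (x / 2))"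
  unfolding leaf_ivp_def
proof (intro conjI allI)
  show "doubled (0 / 2) = 0" "doubled' (0 / 2) = 1"
    using ivp by (simp_all add: leaf_ivp_def doubled_def doubled'_def radical_def)
  fix x
  have half: "((\<lambda>x. x / 2) has_real_derivative 1 / 2) (at x)"
    by (auto intro!: derivative_eq_intros)
  show "((\<lambda>x. doubled (x / 2)) has_real_derivative doubled' (x / 2)) (at x)"
    using DERIV_chain2[OF doubled_has_real_derivative half] by simp
  show "((\<lambda>x. doubled' (x / 2)) has_real_derivative - real 3 * doubled (x / 2) ^ (2 * 3 - 1)) (at x)"
    using DERIV_chain2[OF doubled'_has_real_derivative half] by simp
qed

theorem duplication: "r (2 * l) = 2 * r l * r' l / sqrt (1 + 8 * r l ^ 6)"
  using leaf_ivp_unique[OF leaf_ivp_doubled_half ivp, of "2 * l"]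
  by (simp add: doubled_def radical_def)

end

definition leaf3_speed :: "real \<Rightarrow> real" where
  "leaf3_speed \<theta> = sqrt (1 + sin \<theta> ^ 2 + sin \<theta> ^ 4)"

definition leaf3_arg :: "real \<Rightarrow> real" where
  "leaf3_arg \<theta> = integral {0..\<theta>} (\<lambda>\<phi>. 1 / leaf3_speed \<phi>) - integral {\<theta>..0} (\<lambda>\<phi>. 1 / leaf3_speed \<phi>)"

definition leaf3_phase :: "real \<Rightarrow> real" where
  "leaf3_phase = inv leaf3_arg"

definition leaf3 :: "real \<Rightarrow> real" where
  "leaf3 l = sin (leaf3_phase l)"

definition leaf3' :: "real \<Rightarrow> real" where
  "leaf3' l = cos (leaf3_phase l) * leaf3_speed (leaf3_phase l)"

lemma leaf3_radicand_pos: "0 < 1 + sin (\<theta>::real) ^ 2 + sin \<theta> ^ 4"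
  using zero_le_power2[of "sin \<theta> ^ 2"] by (simp add: power_mult[symmetric] add_pos_nonneg)

lemma leaf3_speed_sq: "leaf3_speed \<theta> ^ 2 = 1 + sin \<theta> ^ 2 + sin \<theta> ^ 4"
  unfolding leaf3_speed_def by (simp add: add_nonneg_nonneg)

lemma leaf3_speed_ge_1: "leaf3_speed \<theta> \<ge> 1"
  unfolding leaf3_speed_def by simp

lemma leaf3_speed_pos: "leaf3_speed \<theta> > 0"
  using leaf3_speed_ge_1[of \<theta>] by simp

lemma leaf3_speed_le_2: "leaf3_speed \<theta> \<le> 2"
proof -
  have "sin \<theta> ^ 2 \<le> 1"
    using abs_le_square_iff[of "sin \<theta>" 1] by simp
  then have "1 + sin \<theta> ^ 2 + sin \<theta> ^ 4 \<le> 2 ^ 2"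
    using power_mono[of "sin \<theta> ^ 2" 1 2] by (simp add: power_mult[symmetric])
  then have "leaf3_speed \<theta> \<le> sqrt (2 ^ 2)"
    unfolding leaf3_speed_def by (rule real_sqrt_le_mono)
  then show ?thesis by simp
qed

lemma leaf3_speed_has_real_derivative:
  "(leaf3_speed has_real_derivative (sin \<theta> + 2 * sin \<theta> ^ 3) * cos \<theta> / leaf3_speed \<theta>) (at \<theta>)"
proof (rule DERIV_cong)
  show "(leaf3_speed has_real_derivative
      inverse (leaf3_speed \<theta>) / 2 * (2 * sin \<theta> * cos \<theta> + 4 * sin \<theta> ^ 3 * cos \<theta>)) (at \<theta>)"
    unfolding leaf3_speed_def using leaf3_radicand_pos[of \<theta>] by (auto intro!: derivative_eq_intros)
qed (use leaf3_speed_pos[of \<theta>] in \<open>simp add: field_simps\<close>)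

lemma leaf3_speed_shift: "leaf3_speed (\<theta> + pi) = leaf3_speed \<theta>"
  and leaf3_speed_minus: "leaf3_speed (- \<theta>) = leaf3_speed \<theta>"
  by (simp_all add: leaf3_speed_def)

lemma continuous_on_leaf3_speed_inverse: "continuous_on S (\<lambda>\<phi>. 1 / leaf3_speed \<phi>)"
proof -
  have "continuous_on S leaf3_speed"
    unfolding leaf3_speed_def[abs_def] by (intro continuous_intros)
  then show ?thesis
    by (intro continuous_intros) (simp_all add: leaf3_speed_pos[THEN less_imp_neq, symmetric])
qed

lemma leaf3_arg_has_real_derivative: "(leaf3_arg has_real_derivative 1 / leaf3_speed \<theta>) (at \<theta>)"
  unfolding leaf3_arg_def[abs_def]
  by (rule signed_integral_has_real_derivative[OF continuous_on_leaf3_speed_inverse])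

lemma leaf3_arg_deriv_ge: "1 / 2 \<le> 1 / leaf3_speed \<theta>"
  using leaf3_speed_le_2[of \<theta>] leaf3_speed_ge_1[of \<theta>] by (simp add: field_simps)

lemma bij_leaf3_arg: "bij leaf3_arg"
  by (rule bij_if_deriv_ge[OF leaf3_arg_has_real_derivative leaf3_arg_deriv_ge]) simp

lemma leaf3_arg_phase: "leaf3_arg (leaf3_phase l) = l"
  unfolding leaf3_phase_def by (simp add: bij_leaf3_arg bij_is_surj surj_f_inv_f)

lemma leaf3_arg_le_iff: "leaf3_arg \<theta> \<le> leaf3_arg \<phi> \<longleftrightarrow> \<theta> \<le> \<phi>"
proof -
  have "strict_mono leaf3_arg"
    by (rule strict_mono_if_deriv_pos[OF leaf3_arg_has_real_derivative]) (simp add: leaf3_speed_pos)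
  then show ?thesis by (simp add: strict_mono_less_eq)
qed

lemma leaf3_phase_has_real_derivative:
  "(leaf3_phase has_real_derivative leaf3_speed (leaf3_phase l)) (at l)"
  using inv_has_real_derivative[OF leaf3_arg_has_real_derivative leaf3_arg_deriv_ge, of l]
  unfolding leaf3_phase_def by simp

lemma leaf3_arg_0: "leaf3_arg 0 = 0"
  by (simp add: leaf3_arg_def)

lemma leaf3_phase_0: "leaf3_phase 0 = 0"
  using leaf3_arg_le_iff[of "leaf3_phase 0" 0] leaf3_arg_le_iff[of 0 "leaf3_phase 0"]
  by (simp add: leaf3_arg_phase leaf3_arg_0)

lemma leaf_ivp_leaf3: "leaf_ivp 3 leaf3 leaf3'"
  unfolding leaf_ivp_def
proof (intro conjI allI)
  show "leaf3 0 = 0" "leaf3' 0 = 1"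
    by (simp_all add: leaf3_def leaf3'_def leaf3_phase_0 leaf3_speed_def)
  fix l
  have "(leaf3 has_real_derivative cos (leaf3_phase l) * leaf3_speed (leaf3_phase l)) (at l)"
    unfolding leaf3_def[abs_def]
    by (rule DERIV_chain2[OF DERIV_sin leaf3_phase_has_real_derivative])
  then show "(leaf3 has_real_derivative leaf3' l) (at l)"
    by (simp add: leaf3'_def)
  define \<theta> where "\<theta> = leaf3_phase l"
  define s where "s = sin \<theta>"
  have "(leaf3' has_real_derivative
      ((s + 2 * s ^ 3) * cos \<theta> * cos \<theta> / leaf3_speed \<theta> - s * leaf3_speed \<theta>) * leaf3_speed \<theta>) (at l)"
    using DERIV_chain2[OF DERIV_mult[OF DERIV_cos leaf3_speed_has_real_derivative]
        leaf3_phase_has_real_derivative[of l]]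
    unfolding leaf3'_def[abs_def] s_def \<theta>_def by simp
  moreover have "((s + 2 * s ^ 3) * cos \<theta> * cos \<theta> / leaf3_speed \<theta> - s * leaf3_speed \<theta>) * leaf3_speed \<theta>
      = (s + 2 * s ^ 3) * cos \<theta> ^ 2 - s * leaf3_speed \<theta> ^ 2"
    using leaf3_speed_pos[of \<theta>] by (simp add: field_simps power2_eq_square)
  moreover have "\<dots> = - 3 * leaf3 l ^ 5"
    unfolding leaf3_speed_sq cos_squared_eq leaf3_def \<theta>_def[symmetric] s_def by algebra
  ultimately show "(leaf3' has_real_derivative - real 3 * leaf3 l ^ (2 * 3 - 1)) (at l)"
    by simp
qed

interpretation leaf3: leaf3_solution leaf3 leaf3'
  by (rule leaf3_solution.intro) (rule leaf_ivp_leaf3)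

lemma sleaf_3_eq_leaf3: "sleaf 3 = leaf3"
  by (rule sleaf_eqI[OF leaf_ivp_leaf3]) simp

lemma sqrt_1_minus_leaf3_pow6: "sqrt (1 - leaf3 l ^ 6) = \<bar>cos (leaf3_phase l)\<bar> * leaf3_speed (leaf3_phase l)"
proof -
  have "1 - leaf3 l ^ 6 = (cos (leaf3_phase l) * leaf3_speed (leaf3_phase l)) ^ 2"
    unfolding leaf3_def power_mult_distrib leaf3_speed_sq cos_squared_eq by algebra
  then show ?thesis
    using leaf3_speed_ge_1[of "leaf3_phase l"] by (simp add: abs_mult)
qed

lemma leaf3_arg_shift_pi: "leaf3_arg (\<theta> + pi) = leaf3_arg \<theta> + leaf3_arg pi"
proof -
  have "((\<lambda>\<theta>. leaf3_arg (\<theta> + pi) - leaf3_arg \<theta>) has_real_derivative 0) (at \<theta>)" for \<theta>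
  proof (rule DERIV_cong)
    show "((\<lambda>\<theta>. leaf3_arg (\<theta> + pi) - leaf3_arg \<theta>) has_real_derivative
        1 / leaf3_speed (\<theta> + pi) * 1 - 1 / leaf3_speed \<theta>) (at \<theta>)"
      by (intro DERIV_diff DERIV_chain2[OF leaf3_arg_has_real_derivative] leaf3_arg_has_real_derivative)
         (auto intro!: derivative_eq_intros)
  qed (simp add: leaf3_speed_shift)
  from DERIV_isconst_all[OF allI[OF this], of \<theta> 0] show ?thesis
    by (simp add: leaf3_arg_0)
qed

lemma leaf3_arg_minus: "leaf3_arg (- \<theta>) = - leaf3_arg \<theta>"
proof -
  have "((\<lambda>\<theta>. leaf3_arg (- \<theta>) + leaf3_arg \<theta>) has_real_derivative 0) (at \<theta>)" for \<theta>
  proof (rule DERIV_cong)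
    show "((\<lambda>\<theta>. leaf3_arg (- \<theta>) + leaf3_arg \<theta>) has_real_derivative
        1 / leaf3_speed (- \<theta>) * (- 1) + 1 / leaf3_speed \<theta>) (at \<theta>)"
      by (intro DERIV_add DERIV_chain2[OF leaf3_arg_has_real_derivative] leaf3_arg_has_real_derivative)
         (auto intro!: derivative_eq_intros)
  qed (simp add: leaf3_speed_minus)
  from DERIV_isconst_all[OF allI[OF this], of \<theta> 0] show ?thesis
    by (simp add: leaf3_arg_0)
qed

lemma leaf3_arg_pi: "leaf3_arg pi = 2 * leaf3_arg (pi / 2)"
  using leaf3_arg_shift_pi[of "- (pi / 2)"] by (simp add: leaf3_arg_minus)

lemma leaf3_arg_shift_int_pi: "leaf3_arg (\<theta> + of_int k * pi) = leaf3_arg \<theta> + of_int k * leaf3_arg pi"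
proof (induction k rule: int_induct[where k = 0])
  case (step1 i)
  have "\<theta> + of_int (i + 1) * pi = (\<theta> + of_int i * pi) + pi"
    by (simp add: algebra_simps)
  then show ?case
    using step1.IH leaf3_arg_shift_pi[of "\<theta> + of_int i * pi"] by (simp add: algebra_simps)
next
  case (step2 i)
  have "\<theta> + of_int i * pi = (\<theta> + of_int (i - 1) * pi) + pi"
    by (simp add: algebra_simps)
  then show ?case
    using step2.IH leaf3_arg_shift_pi[of "\<theta> + of_int (i - 1) * pi"] by (simp add: algebra_simps)
qed simp

lemma leaf3_arg_half_odd_pi:
  "leaf3_arg (of_int k * pi + pi / 2) = (2 * of_int k + 1) * leaf3_arg (pi / 2)"
  using leaf3_arg_shift_int_pi[of "pi / 2" k] by (simp add: leaf3_arg_pi algebra_simps)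

lemma leaf3'_sign:
  assumes "(2 * of_int k - 1) * leaf3_arg (pi / 2) \<le> l" "l \<le> (2 * of_int k + 1) * leaf3_arg (pi / 2)"
  shows "leaf3' l = (if even k then 1 else - 1) * sqrt (1 - leaf3 l ^ 6)"
proof -
  define \<theta> where "\<theta> = leaf3_phase l"
  have "leaf3_arg (of_int (k - 1) * pi + pi / 2) \<le> leaf3_arg \<theta>"
    "leaf3_arg \<theta> \<le> leaf3_arg (of_int k * pi + pi / 2)"
    using assms unfolding leaf3_arg_half_odd_pi \<theta>_def leaf3_arg_phase by (simp_all add: algebra_simps)
  then have "- (pi / 2) \<le> \<theta> - of_int k * pi" "\<theta> - of_int k * pi \<le> pi / 2"
    unfolding leaf3_arg_le_iff by (simp_all add: algebra_simps)
  then have "0 \<le> cos (\<theta> - of_int k * pi)"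
    by (rule cos_ge_zero)
  moreover have "cos \<theta> = (if even k then 1 else - 1) * cos (\<theta> - of_int k * pi)"
    using cos_npi_int[of k] sin_npi_int[of k] by (simp add: cos_diff mult.commute)
  ultimately show ?thesis
    unfolding leaf3'_def sqrt_1_minus_leaf3_pow6 \<theta>_def[symmetric] by auto
qed

lemma leaf_pi_3: "leaf_pi 3 = 2 * leaf3_arg (pi / 2)"
proof -
  have substitution: "((\<lambda>t. (1 / sqrt (1 - t\<^sup>2)) *\<^sub>R (1 / leaf3_speed (arcsin t))) has_integral
      integral {arcsin 0..arcsin 1} (\<lambda>\<phi>. 1 / leaf3_speed \<phi>)
        - integral {arcsin 1..arcsin 0} (\<lambda>\<phi>. 1 / leaf3_speed \<phi>)) {0..1}"
  proof (rule has_integral_substitution_general[where s="{1}" and c=0 and d="pi / 2"])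
    show "arcsin ` {0..1} \<subseteq> {0..pi / 2}"
      using arcsin_le_mono[of _ 1] arcsin_le_mono[of 0] by fastforce
    show "continuous_on {0..pi / 2} (\<lambda>\<phi>. 1 / leaf3_speed \<phi>)"
      by (rule continuous_on_leaf3_speed_inverse)
    show "continuous_on {0..1} arcsin"
      by (intro continuous_intros) auto
    fix t :: real
    assume "t \<in> {0..1} - {1}"
    then have "- 1 < t" "t < 1" by auto
    from DERIV_arcsin[OF this]
    show "(arcsin has_real_derivative 1 / sqrt (1 - t\<^sup>2)) (at t within {0..1})"
      by (simp add: has_field_derivative_at_within divide_inverse)
  qed auto
  have integrand: "(1 / sqrt (1 - t\<^sup>2)) *\<^sub>R (1 / leaf3_speed (arcsin t)) = 1 / sqrt (1 - t ^ (2 * 3))"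
    if "t \<in> {0..1}" for t
  proof -
    have "1 - t ^ 6 = (1 - t\<^sup>2) * (1 + t\<^sup>2 + t ^ 4)"
      by algebra
    then show ?thesis
      using that by (simp add: leaf3_speed_def real_sqrt_mult)
  qed
  have "((\<lambda>t. 1 / sqrt (1 - t ^ (2 * 3))) has_integral
      integral {arcsin 0..arcsin 1} (\<lambda>\<phi>. 1 / leaf3_speed \<phi>)
        - integral {arcsin 1..arcsin 0} (\<lambda>\<phi>. 1 / leaf3_speed \<phi>)) {0..1}"
    using substitution integrand has_integral_cong by (metis (no_types, lifting))
  then have "((\<lambda>t. 1 / sqrt (1 - t ^ (2 * 3))) has_integral leaf3_arg (pi / 2)) {0..1}"
    by (simp add: leaf3_arg_def)
  then show ?thesis
    unfolding leaf_pi_def by (simp add: integral_unique)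
qed

theorem mainTheorem6:
  fixes m :: int and l :: real
  shows "(leaf_pi 3 / 2 * (4 * of_int m - 1) \<le> l \<and> l \<le> leaf_pi 3 / 2 * (4 * of_int m + 1) \<longrightarrow>
           sleaf 3 (2 * l) = 2 * sleaf 3 l * sqrt (1 - (sleaf 3 l) ^ 6) / sqrt (1 + 8 * (sleaf 3 l) ^ 6))
       \<and> (leaf_pi 3 / 2 * (4 * of_int m + 1) \<le> l \<and> l \<le> leaf_pi 3 / 2 * (4 * of_int m + 3) \<longrightarrow>
           sleaf 3 (2 * l) = - (2 * sleaf 3 l * sqrt (1 - (sleaf 3 l) ^ 6) / sqrt (1 + 8 * (sleaf 3 l) ^ 6)))"
proof -
  define P where "P = leaf3_arg (pi / 2)"
  have half_period: "leaf_pi 3 / 2 = P"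
    by (simp add: leaf_pi_3 P_def)
  have "leaf3 (2 * l) = 2 * leaf3 l * leaf3' l / sqrt (1 + 8 * leaf3 l ^ 6)"
    by (rule leaf3.duplication)
  moreover have "leaf3' l = sqrt (1 - leaf3 l ^ 6)"
    if "P * (4 * of_int m - 1) \<le> l" "l \<le> P * (4 * of_int m + 1)"
    using leaf3'_sign[of "2 * m" l] that by (simp add: P_def algebra_simps)
  moreover have "leaf3' l = - sqrt (1 - leaf3 l ^ 6)"
    if "P * (4 * of_int m + 1) \<le> l" "l \<le> P * (4 * of_int m + 3)"
    using leaf3'_sign[of "2 * m + 1" l] that by (simp add: P_def algebra_simps)
  ultimately show ?thesis
    unfolding sleaf_3_eq_leaf3 half_period by auto
qed

end
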